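(* Under the standing setting and assumptions (A1)–(A3) described in the context, assume $\mathcal A$ is polyhedral. Then $\mathcal R(X)\neq\emptyset$ for every $X\in\mathcal X$.
   Context: Let $\mathcal X$ be a Hausdorff, first countable, locally convex topological vector space over $\mathbb R$ with dual $\mathcal X'$, partially ordered by a partial order $\geq$ with positive cone $\mathcal X_+=\{X\in\mathcal X: X\geq 0\}$. Let $\mathcal M\subset\mathcal X$ be a vector subspace with $1<\dim\mathcal M<\infty$, carrying the relative topology, and let $\pi:\mathcal M\to\mathbb R$ be linear. Standing assumptions: (A1) there is $U\in\mathcal M\cap\mathcal X_+$ with $\pi(U)=1$; (A2) $\mathcal A\subsetneq\mathcal X$ is closed, contains $0$, and satisfies $\mathcal A+\mathcal X_+\subset\mathcal A$; (A3) the map $\rho(X)=\inf\{\pi(Z): Z\in\mathcal M,\ X+Z\in\mathcal A\}$ is finitely valued and continuous on $\mathcal X$. The optimal payoff map is $\mathcal R(X)=\{Z\in\mathcal M: X+Z\in\mathcal A,\ \pi(Z)=\rho(X)\}$. $\mathcal A$ is polyhedral if it is a finite intersection of sets $\{X\in\mathcal X:\varphi(X)\geq\alpha\}$ with $\varphi\in\mathcal X'$, $\alpha\in\mathbb R$. *)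

theory Defs
  imports "HOL-Analysis.Analysis"
begin

definition tvs_ops :: "('a::{real_vector,topological_space}) itself \<Rightarrow> bool" where
  "tvs_ops _ \<longleftrightarrow>
     continuous_on UNIV (\<lambda>p::'a \<times> 'a. fst p + snd p) \<and>
     continuous_on UNIV (\<lambda>p::real \<times> 'a. fst p *\<^sub>R snd p)"

definition locally_convex :: "('a::{real_vector,topological_space}) itself \<Rightarrow> bool" where
  "locally_convex _ \<longleftrightarrow>
     (\<forall>U::'a set. open U \<and> 0 \<in> U \<longrightarrow> (\<exists>V. open V \<and> convex V \<and> 0 \<in> V \<and> V \<subseteq> U))"

definition topdual :: "('a::{real_vector,topological_space} \<Rightarrow> real) set" where
  "topdual = {\<phi>. linear \<phi> \<and> continuous_on UNIV \<phi>}"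

definition partial_order_rel :: "('a \<Rightarrow> 'a \<Rightarrow> bool) \<Rightarrow> bool" where
  "partial_order_rel ge \<longleftrightarrow> (\<forall>x. ge x x) \<and> (\<forall>x y. ge x y \<and> ge y x \<longrightarrow> x = y)
     \<and> (\<forall>x y z. ge x y \<and> ge y z \<longrightarrow> ge x z)"

definition linear_on :: "'a::real_vector set \<Rightarrow> ('a \<Rightarrow> real) \<Rightarrow> bool" where
  "linear_on M \<pi> \<longleftrightarrow> (\<forall>x\<in>M. \<forall>y\<in>M. \<pi> (x + y) = \<pi> x + \<pi> y) \<and>
     (\<forall>c. \<forall>x\<in>M. \<pi> (c *\<^sub>R x) = c * \<pi> x)"

definition adm_prices :: "'a::real_vector set \<Rightarrow> ('a \<Rightarrow> real) \<Rightarrow> 'a set \<Rightarrow> 'a \<Rightarrow> real set" where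
  "adm_prices M \<pi> A X = {\<pi> Z | Z. Z \<in> M \<and> X + Z \<in> A}"

definition rho :: "'a::real_vector set \<Rightarrow> ('a \<Rightarrow> real) \<Rightarrow> 'a set \<Rightarrow> 'a \<Rightarrow> real" where
  "rho M \<pi> A X = Inf (adm_prices M \<pi> A X)"

definition optimal_payoffs :: "'a::real_vector set \<Rightarrow> ('a \<Rightarrow> real) \<Rightarrow> 'a set \<Rightarrow> 'a \<Rightarrow> 'a set" where
  "optimal_payoffs M \<pi> A X = {Z \<in> M. X + Z \<in> A \<and> \<pi> Z = rho M \<pi> A X}"

definition polyhedral_set :: "'a::{real_vector,topological_space} set \<Rightarrow> bool" where
  "polyhedral_set A \<longleftrightarrow> (\<exists>\<Phi>::(('a \<Rightarrow> real) \<times> real) set. finite \<Phi> \<and>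
      (\<forall>(\<phi>, \<alpha>)\<in>\<Phi>. \<phi> \<in> topdual) \<and> A = {X. \<forall>(\<phi>, \<alpha>)\<in>\<Phi>. \<phi> X \<ge> \<alpha>})"

end

theory Submission
  imports Defs
begin

text \<open>The set of admissible payoffs \<open>{Z \<in> \<M>. X + Z \<in> \<A>}\<close> is a polyhedron in \<open>\<M>\<close>, and \<open>\<pi>\<close> is a
linear objective bounded below on it, so the infimum \<open>\<rho>(X)\<close> is attained, as in linear programming.
Write a polyhedron as inequality constraints \<open>I\<close> and equality constraints \<open>J\<close>. Unless the objective
is constant on it, there is a direction of descent respecting \<open>J\<close>; it cannot keep all of \<open>I\<close>
satisfied forever (the objective is bounded below), so moving along it until the first inequality
becomes tight reaches the face where that inequality joins \<open>J\<close>, without increasing the objective.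
Induction on \<open>|I|\<close> thus gives finitely many feasible points dominating all others.\<close>

definition feasible_set ::
    "'a::real_vector set \<Rightarrow> (('a \<Rightarrow> real) \<times> real) set \<Rightarrow> (('a \<Rightarrow> real) \<times> real) set \<Rightarrow> 'a set" where
  "feasible_set S I J = {z \<in> S. (\<forall>(\<phi>, \<alpha>)\<in>I. \<alpha> \<le> \<phi> z) \<and> (\<forall>(\<phi>, \<alpha>)\<in>J. \<phi> z = \<alpha>)}"

lemma feasible_setI:
  assumes "z \<in> S" "\<And>\<phi> \<alpha>. (\<phi>, \<alpha>) \<in> I \<Longrightarrow> \<alpha> \<le> \<phi> z" "\<And>\<phi> \<alpha>. (\<phi>, \<alpha>) \<in> J \<Longrightarrow> \<phi> z = \<alpha>"
  shows "z \<in> feasible_set S I J"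
  using assms by (auto simp: feasible_set_def)

lemma feasible_setD:
  assumes "z \<in> feasible_set S I J"
  shows "z \<in> S" and "(\<phi>, \<alpha>) \<in> I \<Longrightarrow> \<alpha> \<le> \<phi> z" and "(\<phi>, \<alpha>) \<in> J \<Longrightarrow> \<phi> z = \<alpha>"
  using assms by (auto simp: feasible_set_def)

lemma feasible_set_tighten: "feasible_set S (I - {i}) (insert i J) \<subseteq> feasible_set S I J"
  unfolding feasible_set_def by (cases i) auto

lemma linear_on_add_scaleR:
  assumes "linear_on S f" "subspace S" "z \<in> S" "d \<in> S"
  shows "f (z + t *\<^sub>R d) = f z + t * f d"
  using assms by (simp add: linear_on_def subspace_scale)

lemma linear_on_diff:
  assumes "linear_on S f" "subspace S" "p \<in> S" "q \<in> S"
  shows "f (q - p) = f q - f p"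
  using linear_on_add_scaleR[OF assms(1,2,4,3), of "-1"] by simp

lemma linear_imp_linear_on: "linear f \<Longrightarrow> linear_on S f"
  by (simp add: linear_on_def linear_add linear_scale)

lemma feasible_set_ray:
  assumes S: "subspace S" and lin: "\<And>i. i \<in> I \<union> J \<Longrightarrow> linear_on S (fst i)"
    and z: "z \<in> feasible_set S I J" and d: "d \<in> S" "\<And>i. i \<in> J \<Longrightarrow> fst i d = 0"
    and ineq: "\<And>\<phi> \<alpha>. (\<phi>, \<alpha>) \<in> I \<Longrightarrow> \<alpha> \<le> \<phi> z + t * \<phi> d"
  shows "z + t *\<^sub>R d \<in> feasible_set S I J"
proof (rule feasible_setI)
  have zS: "z \<in> S" using z by (rule feasible_setD)
  then show "z + t *\<^sub>R d \<in> S" using S d(1) by (simp add: subspace_add subspace_scale)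
  have move: "\<phi> (z + t *\<^sub>R d) = \<phi> z + t * \<phi> d" if "(\<phi>, \<alpha>) \<in> I \<union> J" for \<phi> \<alpha>
    using linear_on_add_scaleR[OF lin[OF that] S zS d(1)] by simp
  show "\<alpha> \<le> \<phi> (z + t *\<^sub>R d)" if "(\<phi>, \<alpha>) \<in> I" for \<phi> \<alpha>
    using ineq[OF that] move[of \<phi> \<alpha>] that by simp
  show "\<phi> (z + t *\<^sub>R d) = \<alpha>" if "(\<phi>, \<alpha>) \<in> J" for \<phi> \<alpha>
    using move[of \<phi> \<alpha>] d(2)[OF that] feasible_setD(3)[OF z that] that by simp
qed

lemma descent_direction_blocked:
  assumes S: "subspace S" and c: "linear_on S c"
    and lin: "\<And>i. i \<in> I \<union> J \<Longrightarrow> linear_on S (fst i)"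
    and bdd: "\<And>z. z \<in> feasible_set S I J \<Longrightarrow> b \<le> c z"
    and z: "z \<in> feasible_set S I J"
    and d: "d \<in> S" "c d < 0" "\<And>i. i \<in> J \<Longrightarrow> fst i d = 0"
  obtains \<phi> \<alpha> where "(\<phi>, \<alpha>) \<in> I" "\<phi> d < 0"
proof -
  have "\<exists>\<phi> \<alpha>. (\<phi>, \<alpha>) \<in> I \<and> \<phi> d < 0"
  proof (rule ccontr)
    assume "\<not> ?thesis"
    then have nonneg: "0 \<le> \<phi> d" if "(\<phi>, \<alpha>) \<in> I" for \<phi> \<alpha>
      using that by (meson not_le)
    define t where "t = (c z - b + 1) / (- c d)"
    have "b \<le> c z" using bdd z .
    then have t: "0 \<le> t" using d(2) by (simp add: t_def divide_nonneg_neg)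
    have "z + t *\<^sub>R d \<in> feasible_set S I J"
    proof (rule feasible_set_ray[OF S lin z d(1) d(3)])
      show "\<alpha> \<le> \<phi> z + t * \<phi> d" if "(\<phi>, \<alpha>) \<in> I" for \<phi> \<alpha>
        using feasible_setD(2)[OF z that] nonneg[OF that] t by (simp add: add_increasing2)
    qed
    then have "b \<le> c z + t * c d"
      using bdd linear_on_add_scaleR[OF c S feasible_setD(1)[OF z] d(1)] by metis
    moreover have "t * c d = b - c z - 1" using d(2) by (simp add: t_def field_simps)
    ultimately show False by simp
  qed
  then show ?thesis using that by blast
qed

lemma ratio_test:
  assumes S: "subspace S" and fin: "finite I"
    and lin: "\<And>i. i \<in> I \<union> J \<Longrightarrow> linear_on S (fst i)"
    and z: "z \<in> feasible_set S I J"
    and d: "d \<in> S" "\<And>i. i \<in> J \<Longrightarrow> fst i d = 0"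
    and blocked: "(\<phi>\<^sub>1, \<alpha>\<^sub>1) \<in> I" "\<phi>\<^sub>1 d < 0"
  obtains i t where "i \<in> I" "0 \<le> t" "z + t *\<^sub>R d \<in> feasible_set S (I - {i}) (insert i J)"
proof -
  define T where "T = {i \<in> I. fst i d < 0}"
  define r where "r i = (fst i z - snd i) / (- fst i d)" for i :: "('a \<Rightarrow> real) \<times> real"
  have T: "finite T" "T \<noteq> {}" using fin blocked by (auto simp: T_def)
  define i where "i = arg_min_on r T"
  obtain \<phi>\<^sub>0 \<alpha>\<^sub>0 where i_eq: "i = (\<phi>\<^sub>0, \<alpha>\<^sub>0)" by fastforce
  have iT: "i \<in> T" and i_least: "\<And>j. j \<in> T \<Longrightarrow> r i \<le> r j"
    using arg_min_if_finite(1)[OF T] arg_min_least[OF T] by (auto simp: i_def)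
  have iI: "(\<phi>\<^sub>0, \<alpha>\<^sub>0) \<in> I" and neg: "\<phi>\<^sub>0 d < 0" using iT by (auto simp: T_def i_eq)
  define t where "t = r i"
  have t0: "0 \<le> t"
    using feasible_setD(2)[OF z iI] neg by (simp add: t_def r_def i_eq divide_nonneg_neg)
  have zS: "z \<in> S" using z by (rule feasible_setD)
  have ray: "z + t *\<^sub>R d \<in> feasible_set S I J"
  proof (rule feasible_set_ray[OF S lin z d])
    fix \<phi> \<alpha> assume j: "(\<phi>, \<alpha>) \<in> I"
    show "\<alpha> \<le> \<phi> z + t * \<phi> d"
    proof (cases "\<phi> d < 0")
      case True
      then have "t \<le> (\<phi> z - \<alpha>) / (- \<phi> d)"
        using i_least[of "(\<phi>, \<alpha>)"] j by (simp add: T_def t_def r_def)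
      then have "t * (- \<phi> d) \<le> \<phi> z - \<alpha>" using True pos_le_divide_eq[of "- \<phi> d"] by auto
      then show ?thesis by (simp add: algebra_simps)
    next
      case False
      then show ?thesis using t0 feasible_setD(2)[OF z j] by (simp add: add_increasing2)
    qed
  qed
  have "\<phi>\<^sub>0 (z + t *\<^sub>R d) = \<alpha>\<^sub>0"
    using linear_on_add_scaleR[OF lin[of i] S zS d(1), of t] iI neg
    by (simp add: i_eq t_def r_def)
  with ray have "z + t *\<^sub>R d \<in> feasible_set S (I - {i}) (insert i J)"
    by (auto simp: feasible_set_def i_eq)
  with iI t0 show ?thesis using that i_eq by blast
qed

lemma descend_to_face:
  assumes S: "subspace S" and c: "linear_on S c" and fin: "finite I"
    and lin: "\<And>i. i \<in> I \<union> J \<Longrightarrow> linear_on S (fst i)"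
    and bdd: "\<And>z. z \<in> feasible_set S I J \<Longrightarrow> b \<le> c z"
    and z: "z \<in> feasible_set S I J"
    and d: "d \<in> S" "c d < 0" "\<And>i. i \<in> J \<Longrightarrow> fst i d = 0"
  obtains i z' where "i \<in> I" "z' \<in> feasible_set S (I - {i}) (insert i J)" "c z' \<le> c z"
proof -
  obtain \<phi>\<^sub>1 \<alpha>\<^sub>1 where "(\<phi>\<^sub>1, \<alpha>\<^sub>1) \<in> I" "\<phi>\<^sub>1 d < 0"
    using descent_direction_blocked[OF S c lin bdd z d] by blast
  then obtain i t where "i \<in> I" "0 \<le> t" "z + t *\<^sub>R d \<in> feasible_set S (I - {i}) (insert i J)"
    using ratio_test[OF S fin lin z d(1,3)] by blast
  moreover have "c (z + t *\<^sub>R d) \<le> c z"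
    using linear_on_add_scaleR[OF c S feasible_setD(1)[OF z] d(1)] \<open>0 \<le> t\<close> d(2)
    by (simp add: mult_nonneg_nonpos)
  ultimately show ?thesis using that by blast
qed

lemma nonconstant_gives_descent_direction:
  assumes S: "subspace S" and c: "linear_on S c" and lin: "\<And>i. i \<in> J \<Longrightarrow> linear_on S (fst i)"
    and p: "p \<in> feasible_set S I J" and q: "q \<in> feasible_set S I J" and pq: "c p \<noteq> c q"
  obtains d where "d \<in> S" "c d < 0" "\<And>i. i \<in> J \<Longrightarrow> fst i d = 0"
proof -
  have pS: "p \<in> S" and qS: "q \<in> S" using p q by (auto dest: feasible_setD(1))
  have ann: "fst i (q - p) = 0" "fst i (p - q) = 0" if "i \<in> J" for i
    using feasible_setD(3)[OF p, of "fst i" "snd i"] feasible_setD(3)[OF q, of "fst i" "snd i"] that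
      linear_on_diff[OF lin[OF that] S pS qS] linear_on_diff[OF lin[OF that] S qS pS]
    by simp_all
  have "c (q - p) < 0 \<or> c (p - q) < 0"
    using pq linear_on_diff[OF c S pS qS] linear_on_diff[OF c S qS pS] by linarith
  then show ?thesis
    using that[of "q - p"] that[of "p - q"] ann subspace_diff[OF S qS pS] subspace_diff[OF S pS qS]
    by blast
qed

lemma finite_dominating_subset:
  assumes S: "subspace S" and c: "linear_on S c" and fin: "finite I"
    and lin: "\<And>i. i \<in> I \<union> J \<Longrightarrow> linear_on S (fst i)"
    and bdd: "\<And>z. z \<in> feasible_set S I J \<Longrightarrow> b \<le> c z"
  shows "\<exists>W. finite W \<and> W \<subseteq> feasible_set S I J \<and> (\<forall>z\<in>feasible_set S I J. \<exists>w\<in>W. c w \<le> c z)"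
  using fin lin bdd
proof (induction I arbitrary: J rule: finite_psubset_induct)
  case (psubset I)
  let ?F = "feasible_set S I J"
  show ?case
  proof (cases "\<forall>p\<in>?F. \<forall>q\<in>?F. c p = c q")
    case const_on_F: True
    show ?thesis
    proof (cases "?F = {}")
      case True
      then show ?thesis by blast
    next
      case False
      then obtain w where "w \<in> ?F" by blast
      then have "\<forall>z\<in>?F. c w \<le> c z" using const_on_F by (metis order_refl)
      with \<open>w \<in> ?F\<close> show ?thesis by (intro exI[of _ "{w}"]) auto
    qed
  next
    case False
    then obtain d where d: "d \<in> S" "c d < 0" "\<And>i. i \<in> J \<Longrightarrow> fst i d = 0"
      using nonconstant_gives_descent_direction[OF S c] psubset.prems(1) by blast
    have "\<exists>W. finite W \<and> W \<subseteq> feasible_set S (I - {i}) (insert i J)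
              \<and> (\<forall>z\<in>feasible_set S (I - {i}) (insert i J). \<exists>w\<in>W. c w \<le> c z)" if "i \<in> I" for i
    proof -
      have "I - {i} \<subset> I" using that by blast
      moreover have "\<And>j. j \<in> (I - {i}) \<union> insert i J \<Longrightarrow> linear_on S (fst j)"
        using psubset.prems(1) that by blast
      moreover have "\<And>z. z \<in> feasible_set S (I - {i}) (insert i J) \<Longrightarrow> b \<le> c z"
        using psubset.prems(2) feasible_set_tighten by blast
      ultimately show ?thesis using psubset.IH by metis
    qed
    then obtain W where W: "\<And>i. i \<in> I \<Longrightarrow> finite (W i) \<and> W i \<subseteq> feasible_set S (I - {i}) (insert i J)
              \<and> (\<forall>z\<in>feasible_set S (I - {i}) (insert i J). \<exists>w\<in>W i. c w \<le> c z)"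
      by metis
    show ?thesis
    proof (intro exI conjI ballI)
      show "finite (\<Union>i\<in>I. W i)" using W psubset.hyps by blast
      show "(\<Union>i\<in>I. W i) \<subseteq> ?F" using W feasible_set_tighten by blast
    next
      fix z assume "z \<in> ?F"
      then obtain i z' where "i \<in> I" "z' \<in> feasible_set S (I - {i}) (insert i J)" "c z' \<le> c z"
        using descend_to_face[OF S c psubset.hyps psubset.prems(1,2) _ d] by blast
      then show "\<exists>w\<in>\<Union>i\<in>I. W i. c w \<le> c z" using W by (meson UN_I order_trans)
    qed
  qed
qed

lemma linear_program_minimum_attained:
  assumes S: "subspace S" and c: "linear_on S c" and fin: "finite I"
    and lin: "\<And>i. i \<in> I \<union> J \<Longrightarrow> linear_on S (fst i)"
    and bdd: "\<And>z. z \<in> feasible_set S I J \<Longrightarrow> b \<le> c z" and ne: "feasible_set S I J \<noteq> {}"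
  obtains w where "w \<in> feasible_set S I J" "\<And>z. z \<in> feasible_set S I J \<Longrightarrow> c w \<le> c z"
proof -
  obtain W where W: "finite W" "W \<subseteq> feasible_set S I J"
    and dom: "\<forall>z\<in>feasible_set S I J. \<exists>w\<in>W. c w \<le> c z"
    using finite_dominating_subset[OF S c fin, of J b] lin bdd by blast
  have "W \<noteq> {}" using dom ne by blast
  then have "arg_min_on c W \<in> W" "\<forall>w\<in>W. c (arg_min_on c W) \<le> c w"
    using arg_min_if_finite(1)[OF W(1)] arg_min_least[OF W(1)] by auto
  then show ?thesis
    using that[of "arg_min_on c W"] W(2) dom by (meson order_trans subsetD)
qed

lemma polyhedron_translate:
  assumes "A = {X. \<forall>(\<phi>, \<alpha>)\<in>\<Phi>. \<alpha> \<le> \<phi> X}" "\<And>i. i \<in> \<Phi> \<Longrightarrow> linear (fst i)"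
  shows "{z \<in> S. X + z \<in> A} = feasible_set S ((\<lambda>(\<phi>, \<alpha>). (\<phi>, \<alpha> - \<phi> X)) ` \<Phi>) {}"
  using assms by (force simp: feasible_set_def linear_add)

theorem mainTheorem10:
  fixes ge :: "'a::{real_vector, t2_space, first_countable_topology} \<Rightarrow> 'a \<Rightarrow> bool"
    and M :: "'a set" and \<pi> :: "'a \<Rightarrow> real" and A :: "'a set"
  assumes tvs: "tvs_ops TYPE('a)"
    and lc: "locally_convex TYPE('a)"
    and po: "partial_order_rel ge"
    and M_sub: "subspace M"
    and M_fin: "\<exists>B. finite B \<and> M = span B"
    and M_dim: "1 < dim M"
    and \<pi>_lin: "linear_on M \<pi>"
    and A1: "\<exists>U\<in>M. ge U 0 \<and> \<pi> U = 1"
    and A2_closed: "closed A" and A2_proper: "A \<noteq> UNIV" and A2_zero: "0 \<in> A"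
    and A2_mono: "\<forall>X\<in>A. \<forall>P. ge P 0 \<longrightarrow> X + P \<in> A"
    and A3_finite: "\<forall>X. adm_prices M \<pi> A X \<noteq> {} \<and> bdd_below (adm_prices M \<pi> A X)"
    and A3_cont: "continuous_on UNIV (rho M \<pi> A)"
    and poly: "polyhedral_set A"
  shows "\<forall>X. optimal_payoffs M \<pi> A X \<noteq> {}"
proof
  fix X
  obtain \<Phi> where \<Phi>: "finite \<Phi>" "\<forall>(\<phi>, \<alpha>)\<in>\<Phi>. \<phi> \<in> topdual" "A = {X. \<forall>(\<phi>, \<alpha>)\<in>\<Phi>. \<alpha> \<le> \<phi> X}"
    using poly unfolding polyhedral_set_def by blast
  define I where "I = (\<lambda>(\<phi>, \<alpha>). (\<phi>, \<alpha> - \<phi> X)) ` \<Phi>"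
  have \<Phi>_lin: "\<And>i. i \<in> \<Phi> \<Longrightarrow> linear (fst i)" using \<Phi>(2) by (auto simp: topdual_def)
  have F: "{z \<in> M. X + z \<in> A} = feasible_set M I {}"
    unfolding I_def by (rule polyhedron_translate[OF \<Phi>(3) \<Phi>_lin])
  have prices: "adm_prices M \<pi> A X = \<pi> ` feasible_set M I {}"
    unfolding adm_prices_def F[symmetric] by blast
  have lin: "\<And>i. i \<in> I \<union> {} \<Longrightarrow> linear_on M (fst i)"
    using \<Phi>_lin by (auto simp: I_def linear_imp_linear_on)
  have "bdd_below (\<pi> ` feasible_set M I {})" using A3_finite prices by metis
  then obtain b where bdd: "\<And>z. z \<in> feasible_set M I {} \<Longrightarrow> b \<le> \<pi> z"
    unfolding bdd_below_def by blast
  have ne: "feasible_set M I {} \<noteq> {}" using A3_finite prices by auto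
  obtain w where w: "w \<in> feasible_set M I {}" "\<And>z. z \<in> feasible_set M I {} \<Longrightarrow> \<pi> w \<le> \<pi> z"
    using linear_program_minimum_attained[OF M_sub \<pi>_lin _ lin bdd ne] \<Phi>(1) unfolding I_def by blast
  then have "rho M \<pi> A X = \<pi> w"
    unfolding rho_def prices by (intro cInf_eq_minimum) auto
  with w(1) F have "w \<in> optimal_payoffs M \<pi> A X" by (auto simp: optimal_payoffs_def)
  then show "optimal_payoffs M \<pi> A X \<noteq> {}" by blast
qed

end
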